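(* Let $V$ be a finite set whose elements carry positive weights, and for $A \subseteq V$ let $\vert A \vert$ denote the total weight of $A$. Let $\mathcal{P}$ and $\mathcal{P}'$ be partitions of $V$ into nonempty parts, and define $\phi_{\mathcal{P}'} : 2^{\mathcal{P}} \to \mathbb{R}$ by $$\phi_{\mathcal{P}'}(\mathcal{S}) = \sum_{P' \in \mathcal{P}'} \vert P' \vert \operatorname{peak}\Big(\frac{\vert U_{\mathcal{S}} \cap P' \vert}{\vert P' \vert}\Big),$$ where $U_{\mathcal{S}}$ is the union of the sets in $\mathcal{S}$ and $\operatorname{peak}(x) = x$ for $x \le 1/2$, $\operatorname{peak}(x) = 1-x$ for $x > 1/2$. Then $\phi_{\mathcal{P}'}$ is symmetric and submodular.
   Context: A function $\Pi : 2^{\mathcal{P}} \to \mathbb{R}$ is symmetric if $\Pi(\mathcal{S}) = \Pi(\mathcal{P} \setminus \mathcal{S})$ for all $\mathcal{S} \subseteq \mathcal{P}$, and submodular if $\Pi(\mathcal{S}_1 \cup \mathcal{S}_2) \le \Pi(\mathcal{S}_1) + \Pi(\mathcal{S}_2) - \Pi(\mathcal{S}_1 \cap \mathcal{S}_2)$ for all $\mathcal{S}_1, \mathcal{S}_2 \subseteq \mathcal{P}$. *)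

theory Defs
  imports Main "HOL-Library.Disjoint_Sets" Complex_Main
begin

definition peak :: "real \<Rightarrow> real" where
  "peak x = (if x \<le> 1/2 then x else 1 - x)"

definition wt :: "('a \<Rightarrow> real) \<Rightarrow> 'a set \<Rightarrow> real" where
  "wt w A = (\<Sum>a\<in>A. w a)"

definition phi :: "('a \<Rightarrow> real) \<Rightarrow> 'a set set \<Rightarrow> 'a set set \<Rightarrow> real" where
  "phi w P' S = (\<Sum>Q\<in>P'. wt w Q * peak (wt w (\<Union>S \<inter> Q) / wt w Q))"

definition symmetric_on :: "'b set \<Rightarrow> ('b set \<Rightarrow> real) \<Rightarrow> bool" where
  "symmetric_on P f \<longleftrightarrow> (\<forall>S. S \<subseteq> P \<longrightarrow> f S = f (P - S))"

definition submodular_on :: "'b set \<Rightarrow> ('b set \<Rightarrow> real) \<Rightarrow> bool" where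
  "submodular_on P f \<longleftrightarrow> (\<forall>S1 S2. S1 \<subseteq> P \<longrightarrow> S2 \<subseteq> P \<longrightarrow>
      f (S1 \<union> S2) \<le> f S1 + f S2 - f (S1 \<inter> S2))"

end

theory Submission
  imports Defs
begin

text \<open>For a part \<open>Q\<close> of positive weight, \<open>|Q| peak (x / |Q|) = min x (|Q| - x)\<close> with
  \<open>x = |U \<inter> Q|\<close>. Replacing \<open>U\<close> by its complement swaps the two arguments of \<open>min\<close>, which gives
  symmetry. Since \<open>x \<mapsto> min x (|Q| - x)\<close> is concave and \<open>U \<mapsto> |U \<inter> Q|\<close> is modular and
  monotone, each summand is submodular in \<open>U\<close>; and for a partition \<open>\<P>\<close> the map
  \<open>\<S> \<mapsto> U\<^sub>\<S>\<close> preserves unions, intersections and complements.\<close>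

lemma peak_one_minus: "peak (1 - x) = peak x"
  unfolding peak_def by auto

lemma mult_peak_divide:
  fixes t x :: real
  assumes "t > 0"
  shows "t * peak (x / t) = min x (t - x)"
  using assms unfolding peak_def by (auto simp: min_def field_simps)

lemma min_diff_concave_exchange:
  fixes a b c d t :: real
  assumes "d \<le> a" "a \<le> c" "d \<le> b" "b \<le> c" "c + d = a + b"
  shows "min c (t - c) + min d (t - d) \<le> min a (t - a) + min b (t - b)"
  using assms unfolding min_def by auto

lemma wt_mono:
  assumes "finite Y" "X \<subseteq> Y" "\<forall>y\<in>Y. 0 \<le> w y"
  shows "wt w X \<le> wt w Y"
  unfolding wt_def using assms by (intro sum_mono2) auto

lemma wt_Un_Int:
  assumes "finite X" "finite Y"
  shows "wt w (X \<union> Y) + wt w (X \<inter> Y) = wt w X + wt w Y"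
  unfolding wt_def using sum.union_inter[OF assms] .

lemma wt_peak_Diff:
  assumes "finite Q"
  shows "wt w Q * peak (wt w (Q - X) / wt w Q) = wt w Q * peak (wt w (X \<inter> Q) / wt w Q)"
proof (cases "wt w Q = 0")
  case False
  have "Q - X = Q - X \<inter> Q" by blast
  then have "wt w (Q - X) = wt w Q - wt w (X \<inter> Q)"
    unfolding wt_def using assms by (simp add: sum_diff)
  then have "wt w (Q - X) / wt w Q = 1 - wt w (X \<inter> Q) / wt w Q"
    using False by (simp add: field_simps)
  then show ?thesis by (simp add: peak_one_minus)
qed simp

lemma wt_peak_submodular:
  assumes "finite Q" "\<forall>q\<in>Q. 0 \<le> w q"
  shows "wt w Q * peak (wt w ((X \<union> Y) \<inter> Q) / wt w Q)
           + wt w Q * peak (wt w ((X \<inter> Y) \<inter> Q) / wt w Q)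
         \<le> wt w Q * peak (wt w (X \<inter> Q) / wt w Q) + wt w Q * peak (wt w (Y \<inter> Q) / wt w Q)"
proof (cases "wt w Q = 0")
  case False
  then have "wt w Q > 0"
    using wt_mono[of Q "{}"] assms by (force simp: wt_def)
  have mono: "wt w (A \<inter> Q) \<le> wt w (B \<inter> Q)" if "A \<subseteq> B" for A B
    using assms that by (intro wt_mono) auto
  have "wt w ((X \<union> Y) \<inter> Q) + wt w ((X \<inter> Y) \<inter> Q) = wt w (X \<inter> Q) + wt w (Y \<inter> Q)"
    using wt_Un_Int[of "X \<inter> Q" "Y \<inter> Q" w] assms(1)
    by (simp add: Int_Un_distrib2 Int_assoc Int_left_commute)
  then show ?thesis
    unfolding mult_peak_divide[OF \<open>wt w Q > 0\<close>]
    by (intro min_diff_concave_exchange) (auto intro: mono)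
qed simp

theorem proposition2:
  fixes V :: "'a set" and w :: "'a \<Rightarrow> real" and P P' :: "'a set set"
  assumes "finite V"
    and "\<forall>v\<in>V. w v > 0"
    and "partition_on V P"
    and "partition_on V P'"
  shows "symmetric_on P (phi w P') \<and> submodular_on P (phi w P')"
proof
  have Q_sub: "Q \<subseteq> V" if "Q \<in> P'" for Q
    using partition_onD1[OF assms(4)] that by blast
  have Q_fin: "finite Q" if "Q \<in> P'" for Q
    using Q_sub[OF that] assms(1) finite_subset by blast
  have disj: "pairwise disjnt P" and V_eq: "V = \<Union>P"
    using partition_onD1[OF assms(3)] partition_onD2[OF assms(3)] by (auto simp: disjoint_def)
  show "symmetric_on P (phi w P')"
    unfolding symmetric_on_def
  proof (intro allI impI)
    fix S assume "S \<subseteq> P"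
    then have "\<Union>(P - S) \<inter> Q = Q - \<Union>S" if "Q \<in> P'" for Q
      using diff_Union_pairwise_disjoint[OF disj] V_eq Q_sub[OF that] by blast
    then show "phi w P' S = phi w P' (P - S)"
      unfolding phi_def by (intro sum.cong) (simp_all add: wt_peak_Diff Q_fin)
  qed
  show "submodular_on P (phi w P')"
    unfolding submodular_on_def
  proof (intro allI impI)
    fix S1 S2 assume "S1 \<subseteq> P" "S2 \<subseteq> P"
    then have "\<Union>(S1 \<inter> S2) = \<Union>S1 \<inter> \<Union>S2"
      using Int_Union_pairwise_disjoint pairwise_subset[OF disj] by (metis Un_least)
    moreover have "\<Union>(S1 \<union> S2) = \<Union>S1 \<union> \<Union>S2" by blast
    ultimately show "phi w P' (S1 \<union> S2) \<le> phi w P' S1 + phi w P' S2 - phi w P' (S1 \<inter> S2)"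
      unfolding phi_def
      using sum_mono[OF wt_peak_submodular[OF Q_fin, of _ w "\<Union>S1" "\<Union>S2"]] assms(2) Q_sub
      by (force simp: sum.distrib algebra_simps intro: less_imp_le)
  qed
qed

end
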